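(* Let $I=\langle N,M,V\rangle$ be an ordered instance of goods with $n$ agents and $m = n + c$ goods, where $n > c > 0$. Then $v_{ij} \ge \mu_i$ for every agent $i\in N$ and every good $j \in \{1, 2, \dots, n - c\}$.
   Context: An instance $I=\langle N,M,V\rangle$ has agents $N=\{1,\dots,n\}$, goods $M=\{1,\dots,m\}$ and additive valuations $v_i$ with $v_i(\emptyset)=0$, $v_i(S)=\sum_{g\in S}v_i(\{g\})$, $v_{ij}:=v_i(\{j\})\ge 0$. It is ordered if $v_{ij}\ge v_{i(j+1)}$ for all $i\in N$ and $1\le j<m$. An allocation ($n$-partition) is an ordered $n$-tuple of pairwise disjoint, possibly empty subsets of $M$ with union $M$. The maximin share of $i$ is $\mu_i=\max_A\min_j v_i(A_j)$ over all allocations $A$. *)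

theory Defs
  imports Complex_Main
begin

definition is_allocation :: "nat \<Rightarrow> nat \<Rightarrow> (nat \<Rightarrow> nat set) \<Rightarrow> bool" where
  "is_allocation n m A \<longleftrightarrow>
     (\<forall>k\<in>{1..n}. \<forall>l\<in>{1..n}. k \<noteq> l \<longrightarrow> A k \<inter> A l = {}) \<and>
     (\<Union>k\<in>{1..n}. A k) = {1..m}"

definition bundle_value :: "(nat \<Rightarrow> nat \<Rightarrow> real) \<Rightarrow> nat \<Rightarrow> nat set \<Rightarrow> real" where
  "bundle_value v i S = (\<Sum>g\<in>S. v i g)"

definition maximin_share :: "(nat \<Rightarrow> nat \<Rightarrow> real) \<Rightarrow> nat \<Rightarrow> nat \<Rightarrow> nat \<Rightarrow> real" where
  "maximin_share v n m i =
     Max {Min ((\<lambda>k. bundle_value v i (A k)) ` {1..n}) | A. is_allocation n m A}"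

definition ordered_instance :: "(nat \<Rightarrow> nat \<Rightarrow> real) \<Rightarrow> nat \<Rightarrow> nat \<Rightarrow> bool" where
  "ordered_instance v n m \<longleftrightarrow>
     (\<forall>i\<in>{1..n}. \<forall>j. 1 \<le> j \<and> j < m \<longrightarrow> v i j \<ge> v i (j + 1))"

end

theory Submission
  imports Defs
begin

text \<open>Let \<open>k = n - c\<close> and fix an allocation. The goods \<open>1, \<dots>, k - 1\<close> meet at most \<open>k - 1\<close>
  bundles, so at least \<open>c + 1\<close> bundles consist of goods from \<open>{k..m}\<close> only. These are
  \<open>2c + 1\<close> goods, so by pigeonhole one of those bundles holds at most one good, and its
  value is at most \<open>v\<^sub>i\<^sub>k \<le> v\<^sub>i\<^sub>j\<close>. Hence the minimum bundle value of every allocation, and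
  thus \<open>\<mu>\<^sub>i\<close>, is at most \<open>v\<^sub>i\<^sub>j\<close>.\<close>

lemma ordered_instance_antimono:
  assumes "ordered_instance v n m" and "i \<in> {1..n}" and "1 \<le> a" and "a \<le> b" and "b \<le> m"
  shows "v i b \<le> v i a"
  using \<open>a \<le> b\<close> \<open>b \<le> m\<close>
proof (induction b rule: dec_induct)
  case base
  then show ?case by simp
next
  case (step p)
  then have "v i (p + 1) \<le> v i p"
    using assms(1-3) unfolding ordered_instance_def by auto
  then show ?case using step by simp
qed

lemma is_allocation_pairwise_disjnt:
  "is_allocation n m A \<Longrightarrow> pairwise (\<lambda>k l. disjnt (A k) (A l)) {1..n}"
  unfolding is_allocation_def pairwise_def disjnt_def by blast

lemma allocation_subset_goods:
  "is_allocation n m A \<Longrightarrow> l \<in> {1..n} \<Longrightarrow> A l \<subseteq> {1..m}"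
  unfolding is_allocation_def by blast

lemma card_members_meeting_le:
  assumes "finite P" and disj: "pairwise (\<lambda>k l. disjnt (A k) (A l)) I"
  shows "card {l \<in> I. A l \<inter> P \<noteq> {}} \<le> card P"
proof -
  define B where "B = {l \<in> I. A l \<inter> P \<noteq> {}}"
  define f where "f l = (SOME g. g \<in> A l \<inter> P)" for l
  have f: "f l \<in> A l \<inter> P" if "l \<in> B" for l
    using that unfolding f_def B_def by (metis (mono_tags, lifting) ex_in_conv mem_Collect_eq someI_ex)
  have "inj_on f B"
  proof (rule inj_onI)
    fix p q assume "p \<in> B" "q \<in> B" "f p = f q"
    then show "p = q"
      using f[of p] f[of q] disj unfolding B_def pairwise_def disjnt_def by auto
  qed
  moreover have "f ` B \<subseteq> P" using f by blast
  ultimately show ?thesis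
    unfolding B_def[symmetric] using \<open>finite P\<close> by (rule card_inj_on_le)
qed

lemma pairwise_disjnt_ex_card_le_one:
  assumes "pairwise (\<lambda>k l. disjnt (A k) (A l)) C" and "\<Union>(A ` C) \<subseteq> T" and "finite T"
    and "card T < 2 * card C"
  shows "\<exists>l\<in>C. card (A l) \<le> 1"
proof (rule ccontr)
  assume "\<not> ?thesis"
  then have two: "2 \<le> card (A l)" if "l \<in> C" for l
    using that by (auto simp: not_le)
  have "finite C"
    using \<open>card T < 2 * card C\<close> by (metis card.infinite mult_0_right not_less_zero)
  have fin: "finite (A l)" if "l \<in> C" for l
    using that assms(2,3) by (meson UN_subset_iff finite_subset)
  have "2 * card C = (\<Sum>l\<in>C. 2)" by simp
  also have "\<dots> \<le> (\<Sum>l\<in>C. card (A l))" using two by (rule sum_mono)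
  also have "\<dots> = card (\<Union>(A ` C))"
    by (rule card_UN_disjoint[symmetric])
      (use \<open>finite C\<close> fin assms(1) in \<open>auto simp: pairwise_def disjnt_def\<close>)
  also have "\<dots> \<le> card T" using assms(2,3) by (rule card_mono[rotated])
  finally show False using \<open>card T < 2 * card C\<close> by simp
qed

lemma bundle_value_card_le_one:
  assumes "ordered_instance v n m" and "i \<in> {1..n}" and "\<forall>j\<in>{1..m}. 0 \<le> v i j"
    and "1 \<le> k" and "k \<le> m" and "S \<subseteq> {k..m}" and "card S \<le> 1"
  shows "bundle_value v i S \<le> v i k"
proof (cases "S = {}")
  case True
  then show ?thesis using assms(3-5) unfolding bundle_value_def by simp
next
  case False
  have "finite S" using \<open>S \<subseteq> {k..m}\<close> finite_subset by blast
  with False \<open>card S \<le> 1\<close> have "card S = 1" by (simp add: card_gt_0_iff le_Suc_eq)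
  then obtain g where g: "S = {g}" by (rule card_1_singletonE)
  then have "v i g \<le> v i k"
    using \<open>S \<subseteq> {k..m}\<close> ordered_instance_antimono[OF assms(1,2,4)] by simp
  then show ?thesis using g unfolding bundle_value_def by simp
qed

lemma allocation_ex_bundle_le:
  assumes "ordered_instance v n m" and "i \<in> {1..n}" and "\<forall>j\<in>{1..m}. 0 \<le> v i j"
    and "m = n + c" and "c < n" and A: "is_allocation n m A"
  shows "\<exists>l\<in>{1..n}. bundle_value v i (A l) \<le> v i (n - c)"
proof -
  define k where "k = n - c"
  define C where "C = {1..n} - {l \<in> {1..n}. A l \<inter> {1..<k} \<noteq> {}}"
  have disj: "pairwise (\<lambda>k l. disjnt (A k) (A l)) {1..n}"
    using A by (rule is_allocation_pairwise_disjnt)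
  have "card {l \<in> {1..n}. A l \<inter> {1..<k} \<noteq> {}} \<le> k - 1"
    using card_members_meeting_le[OF _ disj, of "{1..<k}"] by simp
  then have "c + 1 \<le> card C"
    unfolding C_def k_def using \<open>c < n\<close> by (subst card_Diff_subset) auto
  moreover have "C \<subseteq> {1..n}" unfolding C_def by blast
  moreover have bundles_C: "A l \<subseteq> {k..m}" if "l \<in> C" for l
    using that allocation_subset_goods[OF A] unfolding C_def by fastforce
  moreover have "card {k..m} < 2 * card C"
    using \<open>c + 1 \<le> card C\<close> \<open>m = n + c\<close> \<open>c < n\<close> unfolding k_def by simp
  ultimately obtain l where l: "l \<in> C" "card (A l) \<le> 1"
    using pairwise_disjnt_ex_card_le_one[OF pairwise_subset[OF disj]]
    by (metis UN_subset_iff finite_atLeastAtMost)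
  have "bundle_value v i (A l) \<le> v i k"
    using bundle_value_card_le_one[OF assms(1-3) _ _ bundles_C[OF l(1)] l(2)]
      \<open>m = n + c\<close> \<open>c < n\<close> unfolding k_def by simp
  then show ?thesis using l(1) unfolding C_def k_def by blast
qed

lemma maximin_share_le:
  assumes "1 \<le> n"
    and bound: "\<And>A. is_allocation n m A \<Longrightarrow> \<exists>l\<in>{1..n}. bundle_value v i (A l) \<le> x"
  shows "maximin_share v n m i \<le> x"
proof -
  define S where "S = {Min ((\<lambda>k. bundle_value v i (A k)) ` {1..n}) | A. is_allocation n m A}"
  have "S \<subseteq> bundle_value v i ` Pow {1..m}"
  proof
    fix y assume "y \<in> S"
    then obtain A where A: "is_allocation n m A"
      and y: "y = Min ((\<lambda>k. bundle_value v i (A k)) ` {1..n})"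
      unfolding S_def by blast
    have "y \<in> (\<lambda>k. bundle_value v i (A k)) ` {1..n}"
      unfolding y using \<open>1 \<le> n\<close> by (intro Min_in) auto
    then show "y \<in> bundle_value v i ` Pow {1..m}"
      using allocation_subset_goods[OF A] by blast
  qed
  then have "finite S" by (rule finite_subset) simp
  have "is_allocation n m (\<lambda>l. if l = 1 then {1..m} else {})"
    unfolding is_allocation_def using \<open>1 \<le> n\<close> by auto
  then have "S \<noteq> {}" unfolding S_def by blast
  have "y \<le> x" if "y \<in> S" for y
  proof -
    obtain A where A: "is_allocation n m A"
      and y: "y = Min ((\<lambda>k. bundle_value v i (A k)) ` {1..n})"
      using \<open>y \<in> S\<close> unfolding S_def by blast
    obtain l where l: "l \<in> {1..n}" "bundle_value v i (A l) \<le> x"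
      using bound[OF A] by blast
    have "y \<le> bundle_value v i (A l)"
      unfolding y using l(1) by (intro Min_le) auto
    with l(2) show "y \<le> x" by simp
  qed
  then show ?thesis
    unfolding maximin_share_def S_def[symmetric] using \<open>finite S\<close> \<open>S \<noteq> {}\<close> by simp
qed

theorem lemma9:
  fixes v :: "nat \<Rightarrow> nat \<Rightarrow> real" and n m c :: nat
  assumes nonneg: "\<forall>i\<in>{1..n}. \<forall>j\<in>{1..m}. v i j \<ge> 0"
    and ord: "ordered_instance v n m"
    and m_def: "m = n + c"
    and "n > c" and "c > 0"
    and i: "i \<in> {1..n}"
    and j: "j \<in> {1..n - c}"
  shows "v i j \<ge> maximin_share v n m i"
proof -
  have "maximin_share v n m i \<le> v i (n - c)"
  proof (rule maximin_share_le)
    show "1 \<le> n" using i by simp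
    show "\<exists>l\<in>{1..n}. bundle_value v i (A l) \<le> v i (n - c)" if "is_allocation n m A" for A
      using allocation_ex_bundle_le[OF ord i _ m_def \<open>n > c\<close> that] nonneg i by blast
  qed
  also have "v i (n - c) \<le> v i j"
    using ordered_instance_antimono[OF ord i] j m_def by simp
  finally show ?thesis .
qed

end
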